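(* Let $\Phi = \{\xi = (\tau_L,\delta_L,\tau_R,\delta_R) \in \mathbb{R}^4 : \tau_L > |\delta_L + 1|,\ \tau_R < -|\delta_R+1|\}$ and $\Phi^{(3)} = \{\xi \in \Phi : \delta_L > 0, \delta_R < 0\}$. Let $\alpha(\xi) = \tau_L\tau_R + (\delta_L-1)(\delta_R-1)$ and $g(\xi) = (\tau_R^2 - 2\delta_R,\ \delta_R^2,\ \tau_L\tau_R - \delta_L - \delta_R,\ \delta_L\delta_R)$. For $\xi \in \Phi$ let $\lambda_L^u>1$ be the eigenvalue of $\begin{bmatrix}\tau_L & 1\\ -\delta_L & 0\end{bmatrix}$ of modulus greater than one, $\lambda_R^u<-1$ the eigenvalue of $\begin{bmatrix}\tau_R & 1\\ -\delta_R & 0\end{bmatrix}$ of modulus greater than one, and $$\phi^+(\xi) = \delta_R - \big(\tau_R + \delta_L + \delta_R - (1+\tau_R)\lambda_L^u\big)\lambda_L^u,\qquad \phi^-(\xi) = \delta_R - \big(\delta_R + \tau_R - (1+\lambda_R^u)\lambda_L^u\big)\lambda_L^u,$$ $\phi_{\min}(\xi) = \min[\phi^+(\xi),\phi^-(\xi)]$. For $n \ge 0$ define $$\mathcal{R}^{(3)}_n = \{\xi \in \Phi^{(3)} : \phi_{\min}(g^n(\xi)) > 0,\ \phi_{\min}(g^{n+1}(\xi)) \le 0,\ \alpha(\xi) < 0\}.$$ If $\xi \in \mathcal{R}^{(3)}_n$ with $n \ge 1$, then $g(\xi) \in \mathcal{R}^{(3)}_{n-1}$.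
   Context: $g^n$ denotes the $n$-fold composition of $g$; the conditions in the set definitions are understood to include that the relevant iterates $g^k(\xi)$ lie in $\Phi$, so that $\phi_{\min}$ is defined at them. *)

theory Defs
  imports "HOL-Analysis.Analysis"
begin

type_synonym param = "real \<times> real \<times> real \<times> real"  (* (tau_L, delta_L, tau_R, delta_R) *)

definition Phi :: "param set" where
  "Phi = {(tL, dL, tR, dR). tL > \<bar>dL + 1\<bar> \<and> tR < - \<bar>dR + 1\<bar>}"

definition Phi3 :: "param set" where
  "Phi3 = {xi \<in> Phi. case xi of (tL, dL, tR, dR) \<Rightarrow> dL > 0 \<and> dR < 0}"

definition alpha :: "param \<Rightarrow> real" where
  "alpha xi = (case xi of (tL, dL, tR, dR) \<Rightarrow> tL * tR + (dL - 1) * (dR - 1))"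

definition g :: "param \<Rightarrow> param" where
  "g xi = (case xi of (tL, dL, tR, dR) \<Rightarrow>
     (tR^2 - 2 * dR, dR^2, tL * tR - dL - dR, dL * dR))"

definition cmat :: "real \<Rightarrow> real \<Rightarrow> real^2^2" where
  "cmat t d = vector [vector [t, 1], vector [-d, 0]]"

definition lamLu :: "param \<Rightarrow> real" where
  "lamLu xi = (case xi of (tL, dL, tR, dR) \<Rightarrow>
     (THE l. l > 1 \<and> det (cmat tL dL - l *\<^sub>R mat 1) = 0))"

definition lamRu :: "param \<Rightarrow> real" where
  "lamRu xi = (case xi of (tL, dL, tR, dR) \<Rightarrow>
     (THE l. l < -1 \<and> det (cmat tR dR - l *\<^sub>R mat 1) = 0))"

definition phi_plus :: "param \<Rightarrow> real" where
  "phi_plus xi = (case xi of (tL, dL, tR, dR) \<Rightarrow>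
     dR - (tR + dL + dR - (1 + tR) * lamLu xi) * lamLu xi)"

definition phi_minus :: "param \<Rightarrow> real" where
  "phi_minus xi = (case xi of (tL, dL, tR, dR) \<Rightarrow>
     dR - (dR + tR - (1 + lamRu xi) * lamLu xi) * lamLu xi)"

definition phi_min :: "param \<Rightarrow> real" where
  "phi_min xi = min (phi_plus xi) (phi_minus xi)"

definition R3 :: "nat \<Rightarrow> param set" where
  "R3 n = {xi \<in> Phi3.
      (g ^^ n) xi \<in> Phi \<and> phi_min ((g ^^ n) xi) > 0 \<and>
      (g ^^ (n + 1)) xi \<in> Phi \<and> phi_min ((g ^^ (n + 1)) xi) \<le> 0 \<and>
      alpha xi < 0}"

end

(* The conditions on phi_min in R3 n merely shift index under g^(n+1) = g^n o g, so the content
   is that g preserves the set {xi \<in> Phi3. alpha xi < 0}. Writing Q = dL + dR - tL tR for minus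
   the tau_R-coordinate of g xi, one has alpha (g xi) = (dR^2 - 1)(dL dR - 1) - (tR^2 - 2 dR) Q,
   and alpha xi < 0 says Q > 1 + dL dR, while Phi gives Q > (dL + 1)|dR + 1| + dL + dR. For dR <= -1
   the first product is nonpositive and Q > 0; for -1 < dR < 0 one compares with (1 + dR^2) Q,
   using the second bound when dL + dR > 0. *)

theory Submission
  imports Defs
begin

lemma Phi_abs_prod_less:
  assumes "(tL, dL, tR, dR) \<in> Phi"
  shows "\<bar>dL + 1\<bar> * \<bar>dR + 1\<bar> < - (tL * tR)"
proof -
  have "tL > \<bar>dL + 1\<bar>" and "- tR > \<bar>dR + 1\<bar>"
    using assms by (auto simp: Phi_def)
  then have "\<bar>dL + 1\<bar> * \<bar>dR + 1\<bar> < tL * (- tR)"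
    by (intro mult_strict_mono') auto
  then show ?thesis by simp
qed

lemma Phi3_prod_less:
  assumes "(tL, dL, tR, dR) \<in> Phi3"
  shows "(dL + 1) * \<bar>dR + 1\<bar> < - (tL * tR)"
proof -
  have "(tL, dL, tR, dR) \<in> Phi" and "dL > 0"
    using assms by (auto simp: Phi3_def)
  then show ?thesis
    using Phi_abs_prod_less by fastforce
qed

lemma alpha_neg_iff: "alpha (tL, dL, tR, dR) < 0 \<longleftrightarrow> 1 + dL * dR < dL + dR - tL * tR"
  by (auto simp: alpha_def algebra_simps)

lemma g_in_Phi3:
  assumes xi: "(tL, dL, tR, dR) \<in> Phi3" and neg: "alpha (tL, dL, tR, dR) < 0"
  shows "g (tL, dL, tR, dR) \<in> Phi3"
proof -
  have tR: "tR < - \<bar>dR + 1\<bar>" and dL: "dL > 0" and dR: "dR < 0"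
    using xi by (auto simp: Phi3_def Phi_def)
  have "\<bar>dR + 1\<bar> ^ 2 < \<bar>tR\<bar> ^ 2"
    using tR by (intro power_strict_mono) auto
  then have trace1: "\<bar>dR ^ 2 + 1\<bar> < tR ^ 2 - 2 * dR"
    by (simp add: power2_eq_square algebra_simps)
  have "(dL + 1) * - (dR + 1) \<le> (dL + 1) * \<bar>dR + 1\<bar>"
    using dL by (intro mult_left_mono) auto
  then have "(dL + 1) * - (dR + 1) < - (tL * tR)"
    using Phi3_prod_less[OF xi] by linarith
  then have trace2: "tL * tR - dL - dR < - \<bar>dL * dR + 1\<bar>"
    using neg by (auto simp: alpha_neg_iff algebra_simps)
  have "dL * dR < 0"
    using dL dR by (simp add: mult_pos_neg)
  then show ?thesis
    using trace1 trace2 dR by (simp add: g_def Phi3_def Phi_def)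
qed

lemma alpha_g_eq:
  "alpha (g (tL, dL, tR, dR)) = (dR^2 - 1) * (dL * dR - 1) - (tR^2 - 2 * dR) * (dL + dR - tL * tR)"
  by (simp add: alpha_def g_def algebra_simps power2_eq_square)

lemma alpha_g_bound_large_delta:
  fixes dL dR tR Q :: real
  assumes "0 < dL" and "dR \<le> -1" and "1 + dL * dR < Q" and "- 1 - dL * dR < Q"
  shows "(dR^2 - 1) * (dL * dR - 1) < (tR^2 - 2 * dR) * Q"
proof -
  have "1 \<le> (- dR)^2"
    using assms(2) by (intro one_le_power) auto
  moreover have "dL * dR < 1"
    using assms(1,2) mult_pos_neg[of dL dR] by linarith
  ultimately have "(dR^2 - 1) * (dL * dR - 1) \<le> 0"
    by (intro mult_nonneg_nonpos) auto
  moreover have "0 < tR^2 - 2 * dR"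
    using assms(2) zero_le_power2[of tR] by linarith
  moreover have "0 < Q"
    using assms(3,4) by linarith
  ultimately show ?thesis
    by (smt (verit) mult_pos_pos)
qed

lemma alpha_g_bound_small_delta:
  fixes dL dR tR Q :: real
  assumes "0 < dL" and "- 1 < dR" and "dR < 0" and "1 + dR^2 < tR^2 - 2 * dR"
    and "1 + dL * dR < Q" and "1 + dL * dR + 2 * (dL + dR) < Q"
  shows "(dR^2 - 1) * (dL * dR - 1) < (tR^2 - 2 * dR) * Q"
proof -
  have pos: "0 < 1 + dR^2"
    by (simp add: add_pos_nonneg)
  have bound: "(dR^2 - 1) * (dL * dR - 1) < (1 + dR^2) * Q"
  proof (cases "dL + dR \<le> 0")
    case True
    have "(dR^2 - 1) * (dL * dR - 1) \<le> (1 + dR^2) * (1 + dL * dR)"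
      using True assms(3) mult_nonpos_nonpos[of dR "dL + dR"]
      by (simp add: algebra_simps power2_eq_square)
    also have "\<dots> < (1 + dR^2) * Q"
      using pos assms(5) by simp
    finally show ?thesis .
  next
    case False
    have "0 < 1 + dR + dR^2"
      using assms(2,3) by (smt (verit) zero_le_power2)
    then have "(dR^2 - 1) * (dL * dR - 1) \<le> (1 + dR^2) * (1 + dL * dR + 2 * (dL + dR))"
      using False mult_nonneg_nonneg[of "dL + dR" "1 + dR + dR^2"]
      by (simp add: algebra_simps power2_eq_square)
    also have "\<dots> < (1 + dR^2) * Q"
      using pos assms(6) by simp
    finally show ?thesis .
  qed
  have "dR^2 < 1"
    using assms(2,3) by (simp add: abs_square_less_1)
  moreover have "dL * dR < 1"
    using assms(1,3) mult_pos_neg[of dL dR] by linarith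
  ultimately have "0 < (dR^2 - 1) * (dL * dR - 1)"
    by (intro mult_neg_neg) auto
  with bound pos have "0 < Q"
    by (smt (verit) zero_less_mult_iff)
  with bound assms(4) show ?thesis
    by (smt (verit) mult_strict_right_mono)
qed

lemma alpha_g_neg:
  assumes xi: "(tL, dL, tR, dR) \<in> Phi3" and neg: "alpha (tL, dL, tR, dR) < 0"
  shows "alpha (g (tL, dL, tR, dR)) < 0"
proof -
  define Q where "Q = dL + dR - tL * tR"
  have dL: "0 < dL" and dR: "dR < 0" and tR: "\<bar>dR + 1\<bar> < - tR"
    using xi by (auto simp: Phi3_def Phi_def)
  have Q_det: "1 + dL * dR < Q"
    using neg by (simp add: alpha_neg_iff Q_def)
  have Q_prod: "(dL + 1) * \<bar>dR + 1\<bar> + dL + dR < Q"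
    using Phi3_prod_less[OF xi] by (simp add: Q_def)
  have "(dR^2 - 1) * (dL * dR - 1) < (tR^2 - 2 * dR) * Q"
  proof (cases "dR \<le> -1")
    case True
    then have "- 1 - dL * dR < Q"
      using Q_prod by (simp add: abs_of_nonpos algebra_simps)
    then show ?thesis
      using alpha_g_bound_large_delta[OF dL True Q_det] by blast
  next
    case False
    then have "(dR + 1)^2 < (- tR)^2"
      using tR by (intro power_strict_mono) auto
    then have "1 + dR^2 < tR^2 - 2 * dR"
      by (simp add: algebra_simps power2_eq_square)
    moreover have "1 + dL * dR + 2 * (dL + dR) < Q"
      using Q_prod False by (simp add: abs_of_pos algebra_simps)
    ultimately show ?thesis
      using alpha_g_bound_small_delta[OF dL _ dR _ Q_det] False by simp
  qed
  then show ?thesis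
    by (simp add: alpha_g_eq Q_def)
qed

theorem proposition8p1:
  fixes xi :: param and n :: nat
  assumes "n \<ge> 1" and "xi \<in> R3 n"
  shows "g xi \<in> R3 (n - 1)"
proof -
  obtain m where n: "n = Suc m"
    using assms(1) by (cases n) auto
  obtain tL dL tR dR where xi: "xi = (tL, dL, tR, dR)"
    by (cases xi) auto
  have "xi \<in> Phi3" and "alpha xi < 0"
    using assms(2) by (auto simp: R3_def)
  then have "g xi \<in> Phi3" and "alpha (g xi) < 0"
    unfolding xi by (simp_all add: g_in_Phi3 alpha_g_neg)
  then show ?thesis
    using assms(2) by (simp add: R3_def n funpow_Suc_right del: funpow.simps)
qed

end
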